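(* Let $n\ge 1$ and let $\beta$ be a braid on $n$ strands with exponent sum $w$, and let $\Delta=\Delta_n$ be the Garside positive half-twist braid on $n$ strands, so that $\beta\Delta^2$ is a braid on $n$ strands with exponent sum $w+n(n-1)$. Then the lower Morton--Franks-Williams estimate is sharp for $\beta$ (i.e. the lowest power of $v$ occurring with non-zero coefficient in $P_{\widehat\beta}(v,z)$ is exactly $v^{w-n+1}$) if and only if the upper Morton--Franks-Williams estimate is sharp for $\beta\Delta^2$ (i.e. the highest power of $v$ occurring with non-zero coefficient in $P_{\widehat{\beta\Delta^2}}(v,z)$ is exactly $v^{w+n^2-1}$). Moreover, if this is the case, then the left column of $P_{\widehat\beta}$ equals $(-1)^{n-1}$ times the right column of $P_{\widehat{\beta\Delta^2}}$; that is, the coefficient (a Laurent polynomial in $z$) of $v^{w-n+1}$ in $P_{\widehat\beta}$ equals $(-1)^{n-1}$ times the coefficient of $v^{w+n^2-1}$ in $P_{\widehat{\beta\Delta^2}}$.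
   Context: For a braid $\gamma$, $\widehat\gamma$ denotes its usual closure, oriented by orienting the strands of $\gamma$ in the braid direction. The Homfly polynomial $P_L(v,z)\in\mathbb{Z}[v^{\pm1},z^{\pm1}]$ of an oriented link $L$ is the isotopy invariant with $P=1$ on the unknot and skein relation $v^{-1}P_{L_+}-vP_{L_-}=zP_{L_0}$ (with $L_+,L_-,L_0$ differing at one crossing which is positive, negative, resp. smoothed). Equivalently $P_D=v^{\mathrm{writhe}(D)}H_D$, where $H$ is the framed Homfly polynomial (regular isotopy invariant with $H_{L_+}-H_{L_-}=zH_{L_0}$, a positive kink multiplying $H$ by $v$, a negative kink by $v^{-1}$, and $H=1$ on the crossingless unknot diagram). The Morton--Franks-Williams inequalities state that for a braid on $n$ strands with exponent sum $w$, every power of $v$ occurring in the Homfly polynomial of its closure lies between $v^{w-n+1}$ (lower estimate) and $v^{w+n-1}$ (upper estimate). The "left column" (resp. "right column") of a Homfly polynomial is the coefficient of its lowest (resp. highest) power of $v$, viewed as a Laurent polynomial in $z$. *)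

theory Defs
  imports Main "HOL-Library.Poly_Mapping" "HOL-Library.Product_Plus"
begin

text \<open>Laurent polynomials in two variables v, z with integer coefficients:
  a finitely supported map (a,b) \<mapsto> coefficient of v^a z^b; multiplication is
  convolution (the ring structure of poly_mapping).\<close>
type_synonym lpoly = "(int \<times> int) \<Rightarrow>\<^sub>0 int"

definition vz :: "int \<Rightarrow> int \<Rightarrow> lpoly" where
  "vz a b = Poly_Mapping.single (a, b) 1"

text \<open>Braid words on n strands: a nonzero integer i with |i| < n stands for
  sigma_|i| if i > 0 and sigma_|i|^(-1) if i < 0.\<close>
definition braid_word :: "nat \<Rightarrow> int list \<Rightarrow> bool" where
  "braid_word n w \<longleftrightarrow> (\<forall>g\<in>set w. g \<noteq> 0 \<and> \<bar>g\<bar> < int n)"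

definition exp_sum :: "int list \<Rightarrow> int" where
  "exp_sum w = (\<Sum>g\<leftarrow>w. sgn g)"

text \<open>Garside half twist Delta_n = (s_1 ... s_{n-1})(s_1 ... s_{n-2}) ... (s_1).\<close>
definition half_twist :: "nat \<Rightarrow> int list" where
  "half_twist n = concat (map (\<lambda>k. map int [1..<n - k]) [0..<n])"

definition full_twist :: "nat \<Rightarrow> int list" where
  "full_twist n = half_twist n @ half_twist n"

text \<open>P is the Homfly polynomial of braid closures: P n w = P of the closure
  of the braid word w on n strands.  By Markov's theorem, isotopy invariance of
  the closure is exactly invariance under braid relations, conjugation and
  (positive/negative) stabilisation; together with the skein relation
  v^{-1} P_+ - v P_- = z P_0 (a crossing sigma_i of the braid is a positive crossing
  of the oriented closure) and normalisation on the unknot this determines P.\<close>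
definition homfly_braid :: "(nat \<Rightarrow> int list \<Rightarrow> lpoly) \<Rightarrow> bool" where
  "homfly_braid P \<longleftrightarrow>
     P 1 [] = 1 \<and>
     \<comment> \<open>free cancellation\<close>
     (\<forall>n u w i. braid_word n (u @ w) \<and> i \<noteq> 0 \<and> \<bar>i\<bar> < int n \<longrightarrow>
        P n (u @ [i, -i] @ w) = P n (u @ w)) \<and>
     \<comment> \<open>far commutativity\<close>
     (\<forall>n u w i j. braid_word n (u @ [i, j] @ w) \<and> \<bar>\<bar>i\<bar> - \<bar>j\<bar>\<bar> \<ge> 2 \<longrightarrow>
        P n (u @ [i, j] @ w) = P n (u @ [j, i] @ w)) \<and>
     \<comment> \<open>braid relation\<close>
     (\<forall>n u w i. braid_word n (u @ w) \<and> 0 < i \<and> i + 1 < int n \<longrightarrow>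
        P n (u @ [i, i + 1, i] @ w) = P n (u @ [i + 1, i, i + 1] @ w)) \<and>
     \<comment> \<open>conjugation (Markov move I)\<close>
     (\<forall>n g w. braid_word n (g # w) \<longrightarrow> P n (g # w) = P n (w @ [g])) \<and>
     \<comment> \<open>stabilisation (Markov move II)\<close>
     (\<forall>n w. n \<ge> 1 \<and> braid_word n w \<longrightarrow>
        P (n + 1) (w @ [int n]) = P n w \<and> P (n + 1) (w @ [- int n]) = P n w) \<and>
     \<comment> \<open>skein relation\<close>
     (\<forall>n u w i. braid_word n (u @ w) \<and> 0 < i \<and> i < int n \<longrightarrow>
        vz (-1) 0 * P n (u @ [i] @ w) - vz 1 0 * P n (u @ [-i] @ w)
          = vz 0 1 * P n (u @ w))"

definition vdeg_min :: "lpoly \<Rightarrow> int" where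
  "vdeg_min p = Min (fst ` Poly_Mapping.keys p)"

definition vdeg_max :: "lpoly \<Rightarrow> int" where
  "vdeg_max p = Max (fst ` Poly_Mapping.keys p)"

definition vcoeff :: "lpoly \<Rightarrow> int \<Rightarrow> int \<Rightarrow> int" where
  "vcoeff p a = (\<lambda>b. Poly_Mapping.lookup p (a, b))"

end

theory Submission
  imports Defs Complex_Main
begin

text \<open>Write \<open>H(w) = v\<^sup>-\<^sup>e\<^sup>(\<^sup>w\<^sup>) P(w)\<close> for the framed polynomial of a braid word \<open>w\<close> with exponent
  sum \<open>e(w)\<close>; the theorem is about its coefficients of \<open>v\<^sup>1\<^sup>-\<^sup>n\<close> and \<open>v\<^sup>n\<^sup>-\<^sup>1\<close>. We induct on the number
  of strands. By the skein relation every braid on \<open>n + 1\<close> strands is a \<open>\<int>[z\<^sup>\<plusminus>\<^sup>1]\<close>-combination of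
  braids in which \<open>\<sigma>\<^sub>n\<close> occurs at most once, and positively. A braid on \<open>n\<close> strands read on
  \<open>n + 1\<close> strands has its \<open>H\<close> multiplied by \<open>(v\<^sup>-\<^sup>1 - v) z\<^sup>-\<^sup>1\<close>, and \<open>H(a \<sigma>\<^sub>n b) = v\<^sup>-\<^sup>1 H(a b)\<close> by
  stabilisation. Hence the v-degrees of \<open>H\<close> on \<open>n\<close> strands lie in \<open>[1 - n, n - 1]\<close> (the MFW
  inequality), and the extreme columns on \<open>n + 1\<close> strands are read off from those on \<open>n\<close> strands.

  For the twisted braid write \<open>\<Delta>\<^sub>n\<^sub>+\<^sub>1\<^sup>2 = \<Delta>\<^sub>n J \<Delta>\<^sub>n\<close>, where \<open>J = \<sigma>\<^sub>n\<cdots>\<sigma>\<^sub>1\<sigma>\<^sub>1\<cdots>\<sigma>\<^sub>n\<close> commutes with the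
  braids on \<open>n\<close> strands. Now \<open>J = \<sigma>\<^sub>n J' \<sigma>\<^sub>n\<close> with \<open>J'\<close> equal to \<open>1\<close> plus braids containing \<open>\<sigma>\<^sub>n\<^sub>-\<^sub>1\<close> once;
  since \<open>\<sigma>\<^sub>n\<^sup>2 = 1 + z \<sigma>\<^sub>n\<close> and \<open>\<sigma>\<^sub>n e \<sigma>\<^sub>n\<^sub>-\<^sub>1 f \<sigma>\<^sub>n = e \<sigma>\<^sub>n\<^sub>-\<^sub>1 \<sigma>\<^sub>n \<sigma>\<^sub>n\<^sub>-\<^sub>1 f\<close>, all terms but one are
  stabilisations, which miss the top column. So \<open>J\<close> does not change the top column, and
  \<open>[v\<^sup>1\<^sup>-\<^sup>n] H(\<beta>) = (-1)\<^sup>n\<^sup>-\<^sup>1 [v\<^sup>n\<^sup>-\<^sup>1] H(\<beta> \<Delta>\<^sup>2)\<close> passes from \<open>n\<close> to \<open>n + 1\<close> strands.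

  Finally \<open>P \<noteq> 0\<close>: at \<open>v = 2, z = -3/2\<close> we have \<open>z = v\<^sup>-\<^sup>1 - v\<close>, where the skein relation is solved
  by \<open>P \<equiv> 1\<close>, so \<open>H(w)\<close> specialises to \<open>2\<^sup>-\<^sup>e\<^sup>(\<^sup>w\<^sup>)\<close>.\<close>

section \<open>Laurent polynomials and their specialisation\<close>

lemma lookup_single_mult:
  "Poly_Mapping.lookup (Poly_Mapping.single s c * (p::lpoly)) x = c * Poly_Mapping.lookup p (x - s)"
proof -
  have "Poly_Mapping.lookup (Poly_Mapping.single s c * p) x
     = Sum_any (\<lambda>l. (c when s = l) * Sum_any (\<lambda>q. Poly_Mapping.lookup p q when x = l + q))"
    by (simp add: lookup_mult lookup_single)
  also have "\<dots> = c * Sum_any (\<lambda>q. Poly_Mapping.lookup p q when x = s + q)"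
    by (simp add: when_mult)
  also have "(\<lambda>q. Poly_Mapping.lookup p q when x = s + q) = (\<lambda>q. Poly_Mapping.lookup p q when q = x - s)"
    by (auto simp: fun_eq_iff when_def algebra_simps)
  finally show ?thesis
    by (simp only: Sum_any_when_equal)
qed

lemma vz_mult: "vz a b * vz c d = vz (a + c) (b + d)"
  by (simp add: vz_def mult_single)

lemma vz_0_0: "vz 0 0 = 1"
  by (simp add: vz_def zero_prod_def[symmetric])

lemma of_int_lpoly: "(of_int k :: lpoly) = Poly_Mapping.single 0 k"
proof -
  have "Poly_Mapping.single 0 (of_int k :: int) = (of_int k :: lpoly)"
    by (rule single_of_int)
  then show ?thesis by simp
qed

lemma vcoeff_zero: "vcoeff 0 a b = 0"
  by (simp add: vcoeff_def)

lemma vcoeff_add: "vcoeff (p + q) a b = vcoeff p a b + vcoeff q a b"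
  by (simp add: vcoeff_def lookup_add)

lemma vcoeff_diff: "vcoeff (p - q) a b = vcoeff p a b - vcoeff q a b"
  by (simp add: vcoeff_def lookup_minus)

lemma vcoeff_vz_mult: "vcoeff (vz c d * p) a b = vcoeff p (a - c) (b - d)"
  by (simp add: vcoeff_def vz_def lookup_single_mult)

lemma vcoeff_of_int_mult: "vcoeff (of_int k * p) a b = k * vcoeff p a b"
  by (simp add: vcoeff_def of_int_lpoly lookup_single_mult)

lemma vcoeff_one: "vcoeff 1 a b = (if a = 0 \<and> b = 0 then 1 else 0)"
  by (simp add: vcoeff_def lookup_one zero_prod_def)

definition unlink_factor :: lpoly where
  "unlink_factor = vz (-1) (-1) - vz 1 (-1)"

lemma vcoeff_unlink_factor_mult:
  "vcoeff (unlink_factor * p) a b = vcoeff p (a + 1) (b + 1) - vcoeff p (a - 1) (b + 1)"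
  by (simp add: unlink_factor_def left_diff_distrib vcoeff_diff vcoeff_vz_mult)

definition eval_weight :: "int \<times> int \<Rightarrow> real" where
  "eval_weight x = power_int 2 (fst x) * power_int (-3/2) (snd x)"

definition specialise :: "lpoly \<Rightarrow> real" where
  "specialise p = (\<Sum>x\<in>Poly_Mapping.keys p. of_int (Poly_Mapping.lookup p x) * eval_weight x)"

lemma specialise_superset:
  assumes "finite S" "Poly_Mapping.keys p \<subseteq> S"
  shows "specialise p = (\<Sum>x\<in>S. of_int (Poly_Mapping.lookup p x) * eval_weight x)"
  unfolding specialise_def
  by (rule sum.mono_neutral_left) (use assms in \<open>auto simp: in_keys_iff\<close>)

lemma specialise_add: "specialise (p + q) = specialise p + specialise q"
proof -
  let ?S = "Poly_Mapping.keys p \<union> Poly_Mapping.keys q"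
  have "specialise (p + q) = (\<Sum>x\<in>?S. of_int (Poly_Mapping.lookup (p + q) x) * eval_weight x)"
    by (rule specialise_superset) (auto simp: keys_add)
  also have "\<dots> = (\<Sum>x\<in>?S. of_int (Poly_Mapping.lookup p x) * eval_weight x)
                 + (\<Sum>x\<in>?S. of_int (Poly_Mapping.lookup q x) * eval_weight x)"
    by (simp add: lookup_add sum.distrib algebra_simps)
  also have "\<dots> = specialise p + specialise q"
    by (simp add: specialise_superset[symmetric])
  finally show ?thesis .
qed

lemma specialise_diff: "specialise (p - q) = specialise p - specialise q"
  using specialise_add[of p "- q"] by (simp add: specialise_def sum_negf)

lemma specialise_single_mult:
  "specialise (Poly_Mapping.single s c * p) = of_int c * eval_weight s * specialise p"
proof -
  have sub: "Poly_Mapping.keys (Poly_Mapping.single s c * p) \<subseteq> (\<lambda>y. s + y) ` Poly_Mapping.keys p"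
  proof
    fix x assume "x \<in> Poly_Mapping.keys (Poly_Mapping.single s c * p)"
    then have "Poly_Mapping.lookup p (x - s) \<noteq> 0"
      by (auto simp: in_keys_iff lookup_single_mult)
    then show "x \<in> (\<lambda>y. s + y) ` Poly_Mapping.keys p"
      by (intro image_eqI[of _ _ "x - s"]) (auto simp: in_keys_iff)
  qed
  have "specialise (Poly_Mapping.single s c * p)
      = (\<Sum>x\<in>(\<lambda>y. s + y) ` Poly_Mapping.keys p. of_int (c * Poly_Mapping.lookup p (x - s)) * eval_weight x)"
    by (subst specialise_superset[OF _ sub]) (simp_all add: lookup_single_mult)
  also have "\<dots> = (\<Sum>y\<in>Poly_Mapping.keys p. of_int (c * Poly_Mapping.lookup p y) * eval_weight (s + y))"
    by (subst sum.reindex) (auto simp: inj_on_def)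
  also have "\<dots> = of_int c * eval_weight s * specialise p"
    by (simp add: specialise_def sum_distrib_left eval_weight_def power_int_add algebra_simps
        split: prod.splits)
  finally show ?thesis .
qed

lemma specialise_vz_mult: "specialise (vz a b * p) = power_int 2 a * power_int (-3/2) b * specialise p"
  by (simp add: vz_def specialise_single_mult eval_weight_def)

lemma specialise_of_int_mult: "specialise (of_int k * p) = of_int k * specialise p"
  by (simp add: of_int_lpoly specialise_single_mult eval_weight_def)

lemma specialise_unlink_factor_mult: "specialise (unlink_factor * p) = specialise p"
  by (simp add: unlink_factor_def left_diff_distrib specialise_diff specialise_vz_mult
      power_int_minus)

lemma specialise_one: "specialise 1 = 1"
  by (simp add: specialise_def eval_weight_def)

lemma specialise_zero: "specialise 0 = 0"
  by (simp add: specialise_def)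

section \<open>Braid words and the framed polynomial\<close>

lemma braid_word_append [simp]: "braid_word n (a @ b) \<longleftrightarrow> braid_word n a \<and> braid_word n b"
  by (auto simp: braid_word_def)

lemma braid_word_Cons [simp]: "braid_word n (g # w) \<longleftrightarrow> g \<noteq> 0 \<and> \<bar>g\<bar> < int n \<and> braid_word n w"
  by (auto simp: braid_word_def)

lemma braid_word_Nil [simp]: "braid_word n []"
  by (auto simp: braid_word_def)

lemma braid_word_mono: "braid_word n w \<Longrightarrow> n \<le> m \<Longrightarrow> braid_word m w"
  by (force simp: braid_word_def)

lemma braid_word_Suc: "braid_word n w \<Longrightarrow> braid_word (Suc n) w"
  by (erule braid_word_mono) simp

lemma exp_sum_append [simp]: "exp_sum (a @ b) = exp_sum a + exp_sum b"
  by (simp add: exp_sum_def)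

lemma exp_sum_Cons [simp]: "exp_sum (g # w) = sgn g + exp_sum w"
  by (simp add: exp_sum_def)

lemma exp_sum_Nil [simp]: "exp_sum [] = 0"
  by (simp add: exp_sum_def)

locale homfly =
  fixes P :: "nat \<Rightarrow> int list \<Rightarrow> lpoly"
  assumes homfly: "homfly_braid P"
begin

lemma P_unknot: "P 1 [] = 1"
  using homfly unfolding homfly_braid_def by blast

lemma P_cancel:
  "braid_word n (u @ w) \<Longrightarrow> i \<noteq> 0 \<Longrightarrow> \<bar>i\<bar> < int n \<Longrightarrow> P n (u @ [i, -i] @ w) = P n (u @ w)"
  using homfly unfolding homfly_braid_def by metis

lemma P_far_comm:
  "braid_word n (u @ [i, j] @ w) \<Longrightarrow> \<bar>\<bar>i\<bar> - \<bar>j\<bar>\<bar> \<ge> 2 \<Longrightarrow> P n (u @ [i, j] @ w) = P n (u @ [j, i] @ w)"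
  using homfly unfolding homfly_braid_def by blast

lemma P_braid_rel:
  "braid_word n (u @ w) \<Longrightarrow> 0 < i \<Longrightarrow> i + 1 < int n \<Longrightarrow>
     P n (u @ [i, i + 1, i] @ w) = P n (u @ [i + 1, i, i + 1] @ w)"
  using homfly unfolding homfly_braid_def by metis

lemma P_conj: "braid_word n (g # w) \<Longrightarrow> P n (g # w) = P n (w @ [g])"
  using homfly unfolding homfly_braid_def by blast

lemma P_stab_pos: "n \<ge> 1 \<Longrightarrow> braid_word n w \<Longrightarrow> P (Suc n) (w @ [int n]) = P n w"
  using homfly unfolding homfly_braid_def by simp

lemma P_stab_neg: "n \<ge> 1 \<Longrightarrow> braid_word n w \<Longrightarrow> P (Suc n) (w @ [- int n]) = P n w"
  using homfly unfolding homfly_braid_def by simp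

lemma P_skein:
  "braid_word n (u @ w) \<Longrightarrow> 0 < i \<Longrightarrow> i < int n \<Longrightarrow>
     vz (-1) 0 * P n (u @ [i] @ w) - vz 1 0 * P n (u @ [-i] @ w) = vz 0 1 * P n (u @ w)"
  using homfly unfolding homfly_braid_def by blast

lemma P_rotate: "braid_word m (u @ w) \<Longrightarrow> P m (u @ w) = P m (w @ u)"
proof (induction u arbitrary: w)
  case Nil
  then show ?case by simp
next
  case (Cons g u)
  have "P m ((g # u) @ w) = P m (u @ (w @ [g]))"
    using Cons.prems by (simp add: P_conj)
  also have "\<dots> = P m ((w @ [g]) @ u)"
    by (rule Cons.IH) (use Cons.prems in auto)
  finally show ?case by simp
qed

definition framed :: "nat \<Rightarrow> int list \<Rightarrow> lpoly" where
  "framed m w = vz (- exp_sum w) 0 * P m w"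

lemma P_eq_framed: "P m w = vz (exp_sum w) 0 * framed m w"
  by (simp add: framed_def mult.assoc[symmetric] vz_mult vz_0_0)

lemma framed_unknot: "framed 1 [] = 1"
  using P_unknot by (simp add: framed_def vz_0_0)

lemma framed_rotate: "braid_word m (u @ w) \<Longrightarrow> framed m (u @ w) = framed m (w @ u)"
  by (simp add: framed_def P_rotate add.commute)

lemma P_stab_pos_middle:
  assumes "n \<ge> 1" "braid_word n a" "braid_word n b"
  shows "P (Suc n) (a @ [int n] @ b) = P n (a @ b)"
proof -
  have "P (Suc n) (a @ [int n] @ b) = P (Suc n) ((b @ a) @ [int n])"
    using P_rotate[of "Suc n" "a @ [int n]" b] assms braid_word_Suc by auto
  also have "\<dots> = P n (b @ a)"
    using P_stab_pos[of n "b @ a"] assms by simp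
  also have "\<dots> = P n (a @ b)"
    using P_rotate[of n b a] assms by simp
  finally show ?thesis .
qed

lemma framed_stab_pos:
  assumes "n \<ge> 1" "braid_word n a" "braid_word n b"
  shows "framed (Suc n) (a @ [int n] @ b) = vz (-1) 0 * framed n (a @ b)"
  using assms P_stab_pos_middle[OF assms]
  by (simp add: framed_def mult.assoc[symmetric] vz_mult algebra_simps)

lemma framed_skein:
  assumes "braid_word m (u @ v)" "0 < i" "i < int m"
  shows "framed m (u @ [i] @ v) = framed m (u @ [-i] @ v) + vz 0 1 * framed m (u @ v)"
proof -
  let ?E = "exp_sum (u @ v)"
  have "vz (-1) 0 * P m (u @ [i] @ v) = vz 1 0 * P m (u @ [-i] @ v) + vz 0 1 * P m (u @ v)"
    using P_skein[OF assms] by (simp add: diff_eq_eq add.commute)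
  then have "vz (- ?E) 0 * (vz (-1) 0 * P m (u @ [i] @ v))
        = vz (- ?E) 0 * (vz 1 0 * P m (u @ [-i] @ v)) + vz (- ?E) 0 * (vz 0 1 * P m (u @ v))"
    by (simp add: distrib_left)
  moreover have "sgn i = 1" "sgn (-i) = -1"
    using assms by auto
  ultimately show ?thesis
    by (simp add: framed_def mult.assoc[symmetric] vz_mult algebra_simps)
qed

lemma framed_split_strand:
  assumes "n \<ge> 1" "braid_word n a"
  shows "framed (Suc n) a = unlink_factor * framed n a"
proof -
  have "vz (-1) 0 * P n a - vz 1 0 * P n a = vz 0 1 * P (Suc n) a"
    using P_skein[of "Suc n" a "[]" "int n"] P_stab_pos[of n a] P_stab_neg[of n a] assms
      braid_word_Suc by auto
  then have "vz 0 (-1) * ((vz (-1) 0 - vz 1 0) * P n a) = vz 0 (-1) * (vz 0 1 * P (Suc n) a)"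
    by (simp add: left_diff_distrib)
  then have "P (Suc n) a = unlink_factor * P n a"
    by (simp add: unlink_factor_def mult.assoc[symmetric] right_diff_distrib vz_mult vz_0_0)
  then show ?thesis
    by (simp add: framed_def mult.left_commute)
qed

lemma framed_cancel:
  "braid_word m (u @ v) \<Longrightarrow> i \<noteq> 0 \<Longrightarrow> \<bar>i\<bar> < int m \<Longrightarrow> framed m (u @ [i, -i] @ v) = framed m (u @ v)"
  using P_cancel by (simp add: framed_def)

lemma framed_far_comm:
  "braid_word m (u @ [i, j] @ v) \<Longrightarrow> \<bar>\<bar>i\<bar> - \<bar>j\<bar>\<bar> \<ge> 2 \<Longrightarrow>
     framed m (u @ [i, j] @ v) = framed m (u @ [j, i] @ v)"
  using P_far_comm by (simp add: framed_def algebra_simps)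

lemma framed_braid_rel:
  "braid_word m (u @ v) \<Longrightarrow> 0 < i \<Longrightarrow> i + 1 < int m \<Longrightarrow>
     framed m (u @ [i, i + 1, i] @ v) = framed m (u @ [i + 1, i, i + 1] @ v)"
  using P_braid_rel[of m u v i] by (simp add: framed_def algebra_simps)

end

section \<open>Skein equivalence of combinations of braid words\<close>

text \<open>A formal \<open>\<int>[z\<^sup>\<plusminus>\<^sup>1]\<close>-linear combination \<open>\<Sum> k z\<^sup>j w\<close> of braid words, as a list of triples
  \<open>(k, j, w)\<close>.\<close>
type_synonym comb = "(int \<times> int \<times> int list) list"

definition comb_sum :: "(int list \<Rightarrow> lpoly) \<Rightarrow> comb \<Rightarrow> lpoly" where
  "comb_sum F X = (\<Sum>(k, j, w)\<leftarrow>X. of_int k * vz 0 j * F w)"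

definition comb_real_sum :: "(int list \<Rightarrow> real) \<Rightarrow> comb \<Rightarrow> real" where
  "comb_real_sum G X = (\<Sum>(k, j, w)\<leftarrow>X. of_int k * power_int (-3/2) j * G w)"

definition comb_ctx :: "int list \<Rightarrow> comb \<Rightarrow> int list \<Rightarrow> comb" where
  "comb_ctx u X v = map (\<lambda>(k, j, w). (k, j, u @ w @ v)) X"

definition comb_scale :: "int \<Rightarrow> int \<Rightarrow> comb \<Rightarrow> comb" where
  "comb_scale k j X = map (\<lambda>(k', j', w). (k * k', j + j', w)) X"

definition comb_all :: "(int list \<Rightarrow> bool) \<Rightarrow> comb \<Rightarrow> bool" where
  "comb_all Q X \<longleftrightarrow> (\<forall>(k, j, w)\<in>set X. Q w)"

lemma comb_sum_Nil [simp]: "comb_sum F [] = 0"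
  by (simp add: comb_sum_def)

lemma comb_sum_Cons [simp]: "comb_sum F ((k, j, w) # X) = of_int k * vz 0 j * F w + comb_sum F X"
  by (simp add: comb_sum_def)

lemma comb_sum_append [simp]: "comb_sum F (X @ Y) = comb_sum F X + comb_sum F Y"
  by (simp add: comb_sum_def)

lemma comb_real_sum_Nil [simp]: "comb_real_sum G [] = 0"
  by (simp add: comb_real_sum_def)

lemma comb_real_sum_Cons [simp]:
  "comb_real_sum G ((k, j, w) # X) = of_int k * power_int (-3/2) j * G w + comb_real_sum G X"
  by (simp add: comb_real_sum_def)

lemma comb_real_sum_append [simp]: "comb_real_sum G (X @ Y) = comb_real_sum G X + comb_real_sum G Y"
  by (simp add: comb_real_sum_def)

lemma comb_ctx_Nil [simp]: "comb_ctx u [] v = []"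
  by (simp add: comb_ctx_def)

lemma comb_ctx_Cons [simp]: "comb_ctx u ((k, j, w) # X) v = (k, j, u @ w @ v) # comb_ctx u X v"
  by (simp add: comb_ctx_def)

lemma comb_scale_Nil [simp]: "comb_scale k j [] = []"
  by (simp add: comb_scale_def)

lemma comb_scale_Cons [simp]: "comb_scale k j ((k', j', w) # X) = (k * k', j + j', w) # comb_scale k j X"
  by (simp add: comb_scale_def)

lemma comb_all_Nil [simp]: "comb_all Q []"
  by (simp add: comb_all_def)

lemma comb_all_Cons [simp]: "comb_all Q ((k, j, w) # X) \<longleftrightarrow> Q w \<and> comb_all Q X"
  by (simp add: comb_all_def)

lemma comb_all_append [simp]: "comb_all Q (X @ Y) \<longleftrightarrow> comb_all Q X \<and> comb_all Q Y"
  by (simp add: comb_all_def ball_Un)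

lemma comb_all_scale [simp]: "comb_all Q (comb_scale k j X) \<longleftrightarrow> comb_all Q X"
  by (induction X) auto

lemma comb_all_mono: "comb_all Q X \<Longrightarrow> (\<And>w. Q w \<Longrightarrow> R w) \<Longrightarrow> comb_all R X"
  by (auto simp: comb_all_def)

lemma comb_allD: "comb_all Q X \<Longrightarrow> (k, j, w) \<in> set X \<Longrightarrow> Q w"
  by (auto simp: comb_all_def)

lemma comb_all_ctx_braid_word:
  "comb_all (braid_word n) X \<Longrightarrow> braid_word n u \<Longrightarrow> braid_word n v \<Longrightarrow>
     comb_all (braid_word n) (comb_ctx u X v)"
  by (induction X) auto

lemma comb_sum_ctx: "comb_sum F (comb_ctx u X v) = comb_sum (\<lambda>w. F (u @ w @ v)) X"
  by (induction X) auto

lemma comb_sum_scale: "comb_sum F (comb_scale k j X) = of_int k * vz 0 j * comb_sum F X"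
proof (induction X)
  case (Cons x X)
  obtain k' j' w where x: "x = (k', j', w)"
    by (cases x)
  have "vz 0 (j + j') = vz 0 j * vz 0 j'"
    by (simp add: vz_mult)
  then show ?case
    using Cons by (simp add: x distrib_left ac_simps)
qed simp

lemma comb_real_sum_scale:
  "comb_real_sum G (comb_scale k j X) = of_int k * power_int (-3/2) j * comb_real_sum G X"
proof (induction X)
  case (Cons x X)
  obtain k' j' w where x: "x = (k', j', w)"
    by (cases x)
  show ?case
    using Cons by (simp add: x distrib_left power_int_add ac_simps)
qed simp

lemma vcoeff_comb_sum:
  "vcoeff (comb_sum F X) d b = (\<Sum>(k, j, w)\<leftarrow>X. k * vcoeff (F w) d (b - j))"
  by (induction X) (auto simp: vcoeff_zero vcoeff_add mult.assoc vcoeff_of_int_mult vcoeff_vz_mult)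

lemma specialise_comb_sum: "specialise (comb_sum F X) = comb_real_sum (\<lambda>w. specialise (F w)) X"
  by (induction X)
    (auto simp: specialise_add specialise_of_int_mult specialise_vz_mult mult.assoc specialise_zero)

context homfly
begin

text \<open>The weight records the specialisation at \<open>v = 2, z = -3/2\<close>, where \<open>H(w)\<close> becomes
  \<open>2\<^sup>-\<^sup>e\<^sup>(\<^sup>w\<^sup>)\<close>.\<close>
definition comb_weight :: "comb \<Rightarrow> real" where
  "comb_weight X = comb_real_sum (\<lambda>w. power_int 2 (- exp_sum w)) X"

definition skein_equiv :: "nat \<Rightarrow> comb \<Rightarrow> comb \<Rightarrow> bool" where
  "skein_equiv n X Y \<longleftrightarrow> comb_all (braid_word n) X \<and> comb_all (braid_word n) Y \<and>
     comb_weight X = comb_weight Y \<and>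
     (\<forall>m u v. n \<le> m \<longrightarrow> braid_word m u \<longrightarrow> braid_word m v \<longrightarrow>
        comb_sum (\<lambda>w. framed m (u @ w @ v)) X = comb_sum (\<lambda>w. framed m (u @ w @ v)) Y)"

lemma comb_weight_ctx:
  "comb_weight (comb_ctx u X v) = power_int 2 (- exp_sum u - exp_sum v) * comb_weight X"
proof (induction X)
  case (Cons x X)
  obtain k j w where x: "x = (k, j, w)"
    by (cases x)
  have "power_int (2::real) (- exp_sum (u @ w @ v))
      = power_int 2 (- exp_sum u - exp_sum v) * power_int 2 (- exp_sum w)"
    by (simp add: power_int_add[symmetric] algebra_simps)
  then show ?case
    using Cons by (simp add: x comb_weight_def distrib_left ac_simps)
qed (simp add: comb_weight_def)

lemma skein_equiv_refl: "comb_all (braid_word n) X \<Longrightarrow> skein_equiv n X X"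
  by (simp add: skein_equiv_def)

lemma skein_equiv_sym: "skein_equiv n X Y \<Longrightarrow> skein_equiv n Y X"
  by (simp add: skein_equiv_def)

lemma skein_equiv_trans [trans]: "skein_equiv n X Y \<Longrightarrow> skein_equiv n Y Z \<Longrightarrow> skein_equiv n X Z"
  by (simp add: skein_equiv_def)

lemma skein_equiv_append:
  "skein_equiv n X Y \<Longrightarrow> skein_equiv n X' Y' \<Longrightarrow> skein_equiv n (X @ X') (Y @ Y')"
  by (simp add: skein_equiv_def comb_weight_def)

lemma skein_equiv_scale: "skein_equiv n X Y \<Longrightarrow> skein_equiv n (comb_scale k j X) (comb_scale k j Y)"
  by (simp add: skein_equiv_def comb_weight_def comb_sum_scale comb_real_sum_scale)

lemma skein_equiv_mono: "skein_equiv n X Y \<Longrightarrow> n \<le> N \<Longrightarrow> skein_equiv N X Y"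
  unfolding skein_equiv_def
  by (metis (no_types, lifting) braid_word_mono comb_all_mono order_trans)

lemma skein_equiv_ctx:
  assumes "skein_equiv n X Y" "braid_word n u" "braid_word n v"
  shows "skein_equiv n (comb_ctx u X v) (comb_ctx u Y v)"
proof -
  have "comb_sum (\<lambda>w. framed m (u' @ w @ v')) (comb_ctx u X v)
      = comb_sum (\<lambda>w. framed m (u' @ w @ v')) (comb_ctx u Y v)"
    if "n \<le> m" "braid_word m u'" "braid_word m v'" for m u' v'
  proof -
    have "braid_word m (u' @ u)" "braid_word m (v @ v')"
      using that assms braid_word_mono by auto
    then have "comb_sum (\<lambda>w. framed m ((u' @ u) @ w @ (v @ v'))) X
             = comb_sum (\<lambda>w. framed m ((u' @ u) @ w @ (v @ v'))) Y"
      using assms(1) that(1) unfolding skein_equiv_def by blast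
    then show ?thesis
      by (simp add: comb_sum_ctx)
  qed
  then show ?thesis
    using assms by (simp add: skein_equiv_def comb_weight_ctx comb_all_ctx_braid_word)
qed

lemma skein_equiv_braid_wordD:
  "skein_equiv n X Y \<Longrightarrow> (k, j, w) \<in> set X \<union> set Y \<Longrightarrow> braid_word n w"
  unfolding skein_equiv_def by (auto dest: comb_allD)

lemma comb_sum_framed_eq:
  assumes "skein_equiv n X Y" "n \<le> m"
  shows "comb_sum (framed m) X = comb_sum (framed m) Y"
proof -
  have "comb_sum (\<lambda>w. framed m ([] @ w @ [])) X = comb_sum (\<lambda>w. framed m ([] @ w @ [])) Y"
    using assms unfolding skein_equiv_def by (meson braid_word_Nil)
  then show ?thesis
    by simp
qed

lemma framed_eq_if_skein_equiv:
  "skein_equiv n [(1, 0, w)] [(1, 0, w')] \<Longrightarrow> n \<le> m \<Longrightarrow> framed m w = framed m w'"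
  using comb_sum_framed_eq[of n "[(1, 0, w)]" "[(1, 0, w')]" m] by (simp add: vz_0_0)

lemma skein_equiv_wordI:
  "braid_word n w \<Longrightarrow> braid_word n w' \<Longrightarrow> exp_sum w = exp_sum w' \<Longrightarrow>
     (\<And>m u v. n \<le> m \<Longrightarrow> braid_word m u \<Longrightarrow> braid_word m v \<Longrightarrow> framed m (u @ w @ v) = framed m (u @ w' @ v))
   \<Longrightarrow> skein_equiv n [(1, 0, w)] [(1, 0, w')]"
  unfolding skein_equiv_def comb_weight_def by (simp add: vz_0_0)

lemma skein_equiv_subst:
  assumes "skein_equiv n [(1, 0, w)] Y" "braid_word n u" "braid_word n v"
  shows "skein_equiv n [(1, 0, u @ w @ v)] (comb_ctx u Y v)"
  using skein_equiv_ctx[OF assms] by simp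

lemma skein_equiv_subst_word:
  assumes "skein_equiv n [(1, 0, w)] [(1, 0, w')]" "braid_word n u" "braid_word n v"
  shows "skein_equiv n [(1, 0, u @ w @ v)] [(1, 0, u @ w' @ v)]"
  using skein_equiv_ctx[OF assms] by simp

lemma skein_equiv_cancel:
  "i \<noteq> 0 \<Longrightarrow> \<bar>i\<bar> < int n \<Longrightarrow> skein_equiv n [(1, 0, [i, -i])] [(1, 0, [])]"
  by (intro skein_equiv_wordI) (auto intro!: framed_cancel[simplified] dest: braid_word_mono)

lemma skein_equiv_far_comm:
  "braid_word n [i, j] \<Longrightarrow> \<bar>\<bar>i\<bar> - \<bar>j\<bar>\<bar> \<ge> 2 \<Longrightarrow> skein_equiv n [(1, 0, [i, j])] [(1, 0, [j, i])]"
  by (intro skein_equiv_wordI) (auto intro!: framed_far_comm[simplified] dest: braid_word_mono)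

lemma skein_equiv_braid_rel:
  "0 < i \<Longrightarrow> i + 1 < int n \<Longrightarrow> skein_equiv n [(1, 0, [i, i + 1, i])] [(1, 0, [i + 1, i, i + 1])]"
  by (intro skein_equiv_wordI) (auto intro!: framed_braid_rel[simplified])

lemma skein_equiv_neg:
  assumes "0 < i" "i < int n"
  shows "skein_equiv n [(1, 0, [-i])] [(1, 0, [i]), (-1, 1, [])]"
proof -
  have "comb_sum (\<lambda>w. framed m (u @ w @ v)) [(1, 0, [-i])]
      = comb_sum (\<lambda>w. framed m (u @ w @ v)) [(1, 0, [i]), (-1, 1, [])]"
    if "n \<le> m" "braid_word m u" "braid_word m v" for m u v
    using framed_skein[of m u v i] that assms by (simp add: vz_0_0)
  then show ?thesis
    using assms by (simp add: skein_equiv_def comb_weight_def power_int_minus)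
qed

lemma skein_equiv_square:
  assumes "0 < i" "i < int n"
  shows "skein_equiv n [(1, 0, [i, i])] [(1, 0, []), (1, 1, [i])]"
proof -
  have "comb_sum (\<lambda>w. framed m (u @ w @ v)) [(1, 0, [i, i])]
      = comb_sum (\<lambda>w. framed m (u @ w @ v)) [(1, 0, []), (1, 1, [i])]"
    if "n \<le> m" "braid_word m u" "braid_word m v" for m u v
  proof -
    have "framed m ((u @ [i]) @ [i] @ v)
        = framed m ((u @ [i]) @ [-i] @ v) + vz 0 1 * framed m ((u @ [i]) @ v)"
      using framed_skein[of m "u @ [i]" v i] that assms by simp
    moreover have "framed m ((u @ [i]) @ [-i] @ v) = framed m (u @ v)"
      using framed_cancel[of m u v i] that assms by simp
    ultimately show ?thesis
      by (simp add: vz_0_0)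
  qed
  then show ?thesis
    using assms by (simp add: skein_equiv_def comb_weight_def power_int_minus)
qed

lemma skein_equiv_commute_word:
  assumes "g \<noteq> 0" "\<bar>g\<bar> < int n" "braid_word n w" "\<forall>l\<in>set w. 2 \<le> \<bar>\<bar>g\<bar> - \<bar>l\<bar>\<bar>"
  shows "skein_equiv n [(1, 0, g # w)] [(1, 0, w @ [g])]"
  using assms(3,4)
proof (induction w)
  case Nil
  then show ?case
    using assms by (auto intro: skein_equiv_refl)
next
  case (Cons l w)
  have "skein_equiv n [(1, 0, [] @ [g, l] @ w)] [(1, 0, [] @ [l, g] @ w)]"
    by (rule skein_equiv_subst_word) (use Cons.prems assms in \<open>auto intro!: skein_equiv_far_comm\<close>)
  moreover have "skein_equiv n [(1, 0, [l] @ (g # w) @ [])] [(1, 0, [l] @ (w @ [g]) @ [])]"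
    by (rule skein_equiv_subst_word) (use Cons in auto)
  ultimately show ?case
    using skein_equiv_trans by simp
qed

lemma reduce_in_ctx:
  assumes "\<And>k j f. (k, j, f) \<in> set X \<Longrightarrow> \<exists>Y. comb_all Q Y \<and> skein_equiv N [(1, 0, u @ f @ v)] Y"
  shows "\<exists>Z. comb_all Q Z \<and> skein_equiv N (comb_ctx u X v) Z"
  using assms
proof (induction X)
  case Nil
  then show ?case
    by (intro exI[of _ "[]"]) (simp add: skein_equiv_refl)
next
  case (Cons x X)
  obtain k j f where x: "x = (k, j, f)"
    by (cases x)
  obtain Y where Y: "comb_all Q Y" "skein_equiv N [(1, 0, u @ f @ v)] Y"
    using Cons.prems[of k j f] x by auto
  obtain Z where Z: "comb_all Q Z" "skein_equiv N (comb_ctx u X v) Z"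
    using Cons.IH Cons.prems by (meson list.set_intros(2))
  have "skein_equiv N (comb_scale k j [(1, 0, u @ f @ v)] @ comb_ctx u X v) (comb_scale k j Y @ Z)"
    by (intro skein_equiv_append skein_equiv_scale Y Z)
  then show ?case
    using Y Z x by (intro exI[of _ "comb_scale k j Y @ Z"]) simp
qed

end

section \<open>Reducing the top generator\<close>

definition top_once :: "nat \<Rightarrow> int list \<Rightarrow> bool" where
  "top_once n w \<longleftrightarrow> (\<exists>a b. w = a @ [int n] @ b \<and> braid_word n a \<and> braid_word n b)"

definition top_reduced :: "nat \<Rightarrow> int list \<Rightarrow> bool" where
  "top_reduced n w \<longleftrightarrow> braid_word n w \<or> top_once n w"

lemma top_onceI: "braid_word n a \<Longrightarrow> braid_word n b \<Longrightarrow> top_once n (a @ [int n] @ b)"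
  unfolding top_once_def by blast

lemma top_reduced_append: "top_reduced n f \<Longrightarrow> braid_word n u \<Longrightarrow> top_reduced n (f @ u)"
  unfolding top_reduced_def top_once_def by fastforce

lemma braid_word_if_top_reduced: "top_reduced n w \<Longrightarrow> n \<ge> 1 \<Longrightarrow> braid_word (Suc n) w"
  by (auto simp: top_reduced_def top_once_def intro: braid_word_Suc)

context homfly
begin

lemma skein_equiv_top_commute:
  assumes "braid_word (n - 1) e" "n \<ge> 1"
  shows "skein_equiv (Suc n) [(1, 0, int n # e)] [(1, 0, e @ [int n])]"
proof (rule skein_equiv_commute_word)
  show "braid_word (Suc n) e"
    using assms braid_word_mono by auto
  show "\<forall>l\<in>set e. 2 \<le> \<bar>\<bar>int n\<bar> - \<bar>l\<bar>\<bar>"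
    using assms by (auto simp: braid_word_def)
qed (use assms in auto)

lemma top_once_pos: "top_once m w \<Longrightarrow> braid_word k w \<Longrightarrow> m \<ge> 1"
  by (auto simp: top_once_def)

text \<open>\<open>\<sigma>\<^sub>n e \<sigma>\<^sub>n\<^sub>-\<^sub>1 f \<sigma>\<^sub>n = e \<sigma>\<^sub>n\<^sub>-\<^sub>1 \<sigma>\<^sub>n \<sigma>\<^sub>n\<^sub>-\<^sub>1 f\<close> for \<open>e, f\<close> on \<open>n - 1\<close> strands: a second occurrence of
  \<open>\<sigma>\<^sub>n\<close> is traded for one of \<open>\<sigma>\<^sub>n\<^sub>-\<^sub>1\<close>.\<close>
lemma slide_top_crossing:
  assumes n2: "n \<ge> 2" and x: "braid_word n x" and f: "top_once (n - 1) f"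
  shows "\<exists>w. top_once n w \<and> skein_equiv (Suc n) [(1, 0, x @ [int n] @ f @ [int n])] [(1, 0, w)]"
proof -
  obtain e f' where f: "f = e @ [int n - 1] @ f'" and ef: "braid_word (n - 1) e" "braid_word (n - 1) f'"
    using f n2 unfolding top_once_def by (auto simp: of_nat_diff)
  have n1: "n \<ge> 1"
    using n2 by simp
  have S: "braid_word (Suc n) x" "braid_word (Suc n) e" "braid_word (Suc n) f'"
    using x ef braid_word_mono by auto
  have "skein_equiv (Suc n) [(1, 0, x @ (int n # e) @ ([int n - 1] @ f' @ [int n]))]
                            [(1, 0, x @ (e @ [int n]) @ ([int n - 1] @ f' @ [int n]))]"
    by (rule skein_equiv_subst_word[OF skein_equiv_top_commute[OF ef(1) n1]]) (use S n2 in auto)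
  also have "skein_equiv (Suc n) \<dots> [(1, 0, (x @ e @ [int n] @ [int n - 1]) @ (int n # f') @ [])]"
    using skein_equiv_subst_word[OF skein_equiv_sym[OF skein_equiv_top_commute[OF ef(2) n1]],
        of "x @ e @ [int n] @ [int n - 1]" "[]"] S n2
    by simp
  also have "skein_equiv (Suc n) \<dots> [(1, 0, (x @ e) @ [int n - 1, int n - 1 + 1, int n - 1] @ f')]"
    using skein_equiv_subst_word[OF skein_equiv_sym[OF skein_equiv_braid_rel[of "int n - 1" "Suc n"]],
        of "x @ e" f'] S n2
    by simp
  finally have "skein_equiv (Suc n) [(1, 0, x @ [int n] @ f @ [int n])]
                  [(1, 0, (x @ e @ [int n - 1]) @ [int n] @ ([int n - 1] @ f'))]"
    using f by simp
  moreover have "top_once n ((x @ e @ [int n - 1]) @ [int n] @ ([int n - 1] @ f'))"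
    by (rule top_onceI) (use x ef n2 braid_word_mono[of "n - 1" _ n] in auto)
  ultimately show ?thesis
    by blast
qed

lemma reduce_top_square_term:
  assumes n1: "n \<ge> 1" and a: "braid_word n a"
    and f: "braid_word n f" "top_reduced (n - 1) f"
  shows "\<exists>Y. comb_all (top_reduced n) Y \<and> skein_equiv (Suc n) [(1, 0, a @ [int n] @ f @ [int n])] Y"
proof (cases "braid_word (n - 1) f")
  case True
  have S: "braid_word (Suc n) a" "braid_word (Suc n) f"
    using a f braid_word_Suc by auto
  have "skein_equiv (Suc n) [(1, 0, a @ (int n # f) @ [int n])] [(1, 0, a @ (f @ [int n]) @ [int n])]"
    by (rule skein_equiv_subst_word[OF skein_equiv_top_commute[OF True n1]]) (use S n1 in auto)
  also have "skein_equiv (Suc n) \<dots> (comb_ctx (a @ f) [(1, 0, []), (1, 1, [int n])] [])"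
    using skein_equiv_subst[OF skein_equiv_square[of "int n" "Suc n"], of "a @ f" "[]"] S n1
    by simp
  finally show ?thesis
    using a f top_onceI[of n "a @ f" "[]"]
    by (intro exI[of _ "[(1, 0, a @ f), (1, 1, (a @ f) @ [int n] @ [])]"]) (simp add: top_reduced_def)
next
  case False
  then have once: "top_once (n - 1) f"
    using f by (simp add: top_reduced_def)
  then have "n \<ge> 2"
    using top_once_pos[OF once f(1)] by simp
  then show ?thesis
    using slide_top_crossing[OF _ a once] unfolding top_reduced_def
    by (metis comb_all_Cons comb_all_Nil)
qed

lemma reduce_top_square:
  assumes IH: "\<And>b. braid_word n b \<Longrightarrow> \<exists>Y. comb_all (top_reduced (n - 1)) Y \<and> skein_equiv n [(1, 0, b)] Y"
    and n1: "n \<ge> 1" and ab: "braid_word n a" "braid_word n b"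
  shows "\<exists>Y. comb_all (top_reduced n) Y \<and> skein_equiv (Suc n) [(1, 0, a @ [int n] @ b @ [int n])] Y"
proof -
  obtain Y0 where Y0: "comb_all (top_reduced (n - 1)) Y0" "skein_equiv n [(1, 0, b)] Y0"
    using IH ab by blast
  have "skein_equiv (Suc n) [(1, 0, (a @ [int n]) @ b @ [int n])] (comb_ctx (a @ [int n]) Y0 [int n])"
    by (rule skein_equiv_subst) (use skein_equiv_mono[OF Y0(2)] ab n1 braid_word_Suc in auto)
  moreover have "\<exists>Z. comb_all (top_reduced n) Z \<and> skein_equiv (Suc n) (comb_ctx (a @ [int n]) Y0 [int n]) Z"
  proof (rule reduce_in_ctx)
    fix k j f assume kf: "(k, j, f) \<in> set Y0"
    have "braid_word n f"
      using skein_equiv_braid_wordD[OF Y0(2)] kf by auto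
    then show "\<exists>Y. comb_all (top_reduced n) Y \<and> skein_equiv (Suc n) [(1, 0, (a @ [int n]) @ f @ [int n])] Y"
      using reduce_top_square_term[OF n1 ab(1)] comb_allD[OF Y0(1) kf] by simp
  qed
  ultimately show ?thesis
    using skein_equiv_trans by fastforce
qed

lemma reduce_append_top:
  assumes IH: "\<And>b. braid_word n b \<Longrightarrow> \<exists>Y. comb_all (top_reduced (n - 1)) Y \<and> skein_equiv n [(1, 0, b)] Y"
    and n1: "n \<ge> 1" and red: "top_reduced n f"
  shows "\<exists>Y. comb_all (top_reduced n) Y \<and> skein_equiv (Suc n) [(1, 0, f @ [int n])] Y"
proof (cases "braid_word n f")
  case True
  have "top_reduced n (f @ [int n] @ [])"
    using top_onceI[OF True braid_word_Nil] by (simp add: top_reduced_def)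
  then show ?thesis
    using True n1 braid_word_Suc[of n f]
    by (intro exI[of _ "[(1, 0, f @ [int n])]"]) (simp add: skein_equiv_refl)
next
  case False
  then obtain a b where "f = a @ [int n] @ b" "braid_word n a" "braid_word n b"
    using red unfolding top_reduced_def top_once_def by blast
  then show ?thesis
    using reduce_top_square[OF IH n1, of a b] by simp
qed

lemma reduce_append_letter:
  assumes IH: "\<And>b. braid_word n b \<Longrightarrow> \<exists>Y. comb_all (top_reduced (n - 1)) Y \<and> skein_equiv n [(1, 0, b)] Y"
    and red: "top_reduced n f" and g: "g \<noteq> 0" "\<bar>g\<bar> < int (Suc n)"
  shows "\<exists>Y. comb_all (top_reduced n) Y \<and> skein_equiv (Suc n) [(1, 0, f @ [g])] Y"
proof -
  have n1: "n \<ge> 1"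
    using g by auto
  have fS: "braid_word (Suc n) f"
    using braid_word_if_top_reduced[OF red n1] .
  consider "\<bar>g\<bar> < int n" | "g = int n" | "g = - int n"
    using g by linarith
  then show ?thesis
  proof cases
    case 1
    have "top_reduced n (f @ [g])"
      using top_reduced_append[OF red] 1 g by simp
    then show ?thesis
      using fS g by (intro exI[of _ "[(1, 0, f @ [g])]"]) (simp add: skein_equiv_refl)
  next
    case 2
    then show ?thesis
      using reduce_append_top[OF IH n1 red] by simp
  next
    case 3
    obtain Y1 where Y1: "comb_all (top_reduced n) Y1" "skein_equiv (Suc n) [(1, 0, f @ [int n])] Y1"
      using reduce_append_top[OF IH n1 red] by blast
    have "skein_equiv (Suc n) [(1, 0, f @ [- int n] @ [])] (comb_ctx f [(1, 0, [int n]), (-1, 1, [])] [])"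
      by (rule skein_equiv_subst[OF skein_equiv_neg[of "int n" "Suc n"]]) (use n1 fS in auto)
    then have "skein_equiv (Suc n) [(1, 0, f @ [g])] ([(1, 0, f @ [int n])] @ [(-1, 1, f)])"
      using 3 by simp
    also have "skein_equiv (Suc n) \<dots> (Y1 @ [(-1, 1, f)])"
      by (intro skein_equiv_append Y1(2) skein_equiv_refl) (simp add: fS)
    finally show ?thesis
      using Y1(1) red by (intro exI[of _ "Y1 @ [(-1, 1, f)]"]) simp
  qed
qed

lemma top_reduction_step:
  assumes IH: "\<And>b. braid_word n b \<Longrightarrow> \<exists>Y. comb_all (top_reduced (n - 1)) Y \<and> skein_equiv n [(1, 0, b)] Y"
  shows "braid_word (Suc n) w \<Longrightarrow> \<exists>X. comb_all (top_reduced n) X \<and> skein_equiv (Suc n) [(1, 0, w)] X"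
proof (induction w rule: rev_induct)
  case Nil
  have "top_reduced n []"
    by (simp add: top_reduced_def)
  then show ?case
    by (intro exI[of _ "[(1, 0, [])]"]) (simp add: skein_equiv_refl)
next
  case (snoc g w)
  have w: "braid_word (Suc n) w" and g: "g \<noteq> 0" "\<bar>g\<bar> < int (Suc n)"
    using snoc.prems by auto
  obtain X where X: "comb_all (top_reduced n) X" "skein_equiv (Suc n) [(1, 0, w)] X"
    using snoc.IH[OF w] by blast
  have e1: "skein_equiv (Suc n) [(1, 0, [] @ w @ [g])] (comb_ctx [] X [g])"
    by (rule skein_equiv_subst[OF X(2)]) (use g in auto)
  have "\<exists>Z. comb_all (top_reduced n) Z \<and> skein_equiv (Suc n) (comb_ctx [] X [g]) Z"
    by (rule reduce_in_ctx) (use reduce_append_letter[OF IH _ g] comb_allD[OF X(1)] in auto)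
  then show ?case
    using e1 skein_equiv_trans by fastforce
qed

lemma top_reduction:
  "braid_word (Suc n) w \<Longrightarrow> \<exists>X. comb_all (top_reduced n) X \<and> skein_equiv (Suc n) [(1, 0, w)] X"
proof (induction n arbitrary: w)
  case 0
  then have "w = []"
    by (cases w) auto
  moreover have "top_reduced 0 []"
    by (simp add: top_reduced_def)
  ultimately show ?case
    by (intro exI[of _ "[(1, 0, [])]"]) (simp add: skein_equiv_refl)
next
  case (Suc n)
  show ?case
    by (rule top_reduction_step[OF _ Suc.prems]) (use Suc.IH in auto)
qed

end

section \<open>The Morton--Franks--Williams inequality\<close>

definition mfw_range :: "nat \<Rightarrow> lpoly \<Rightarrow> bool" where
  "mfw_range n p \<longleftrightarrow> (\<forall>d b. d < 1 - int n \<or> int n - 1 < d \<longrightarrow> vcoeff p d b = 0)"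

context homfly
begin

lemma mfw_top_reduced:
  assumes n1: "n \<ge> 1"
    and IH: "\<And>w. braid_word n w \<Longrightarrow>
               mfw_range n (framed n w) \<and> specialise (framed n w) = power_int 2 (- exp_sum w)"
    and red: "top_reduced n f"
  shows "mfw_range (Suc n) (framed (Suc n) f) \<and> specialise (framed (Suc n) f) = power_int 2 (- exp_sum f)"
proof (cases "braid_word n f")
  case True
  then show ?thesis
    using IH[OF True] unfolding framed_split_strand[OF n1 True]
    by (auto simp: mfw_range_def vcoeff_unlink_factor_mult specialise_unlink_factor_mult)
next
  case False
  then obtain a b where f: "f = a @ [int n] @ b" and ab: "braid_word n a" "braid_word n b"
    using red unfolding top_reduced_def top_once_def by blast
  have ab': "braid_word n (a @ b)"
    using ab by simp
  have "- exp_sum f = -1 + - exp_sum (a @ b)"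
    using n1 f by simp
  then have "power_int 2 (- exp_sum f) = power_int 2 (-1) * power_int (2::real) (- exp_sum (a @ b))"
    by (simp only:) (rule power_int_add, simp)
  then show ?thesis
    using IH[OF ab'] unfolding f framed_stab_pos[OF n1 ab]
    by (auto simp: mfw_range_def vcoeff_vz_mult specialise_vz_mult)
qed

lemma mfw_step:
  assumes n1: "n \<ge> 1"
    and IH: "\<And>w. braid_word n w \<Longrightarrow>
               mfw_range n (framed n w) \<and> specialise (framed n w) = power_int 2 (- exp_sum w)"
    and w: "braid_word (Suc n) w"
  shows "mfw_range (Suc n) (framed (Suc n) w) \<and> specialise (framed (Suc n) w) = power_int 2 (- exp_sum w)"
proof -
  obtain X where X: "comb_all (top_reduced n) X" "skein_equiv (Suc n) [(1, 0, w)] X"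
    using top_reduction[OF w] by blast
  have framed_w: "framed (Suc n) w = comb_sum (framed (Suc n)) X"
    using comb_sum_framed_eq[OF X(2) order_refl] by (simp add: vz_0_0)
  have terms: "mfw_range (Suc n) (framed (Suc n) f) \<and>
      specialise (framed (Suc n) f) = power_int 2 (- exp_sum f)" if "(k, j, f) \<in> set X" for k j f
    using mfw_top_reduced[OF n1 IH] comb_allD[OF X(1) that] by blast
  have "mfw_range (Suc n) (comb_sum (framed (Suc n)) X)"
    unfolding mfw_range_def vcoeff_comb_sum
  proof (intro allI impI)
    fix d b assume d: "d < 1 - int (Suc n) \<or> int (Suc n) - 1 < d"
    have "\<forall>x\<in>set X. (case x of (k, j, w) \<Rightarrow> k * vcoeff (framed (Suc n) w) d (b - j)) = 0"
      using terms d unfolding mfw_range_def by auto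
    then show "(\<Sum>(k, j, w)\<leftarrow>X. k * vcoeff (framed (Suc n) w) d (b - j)) = 0"
      by (induction X) auto
  qed
  moreover have "specialise (comb_sum (framed (Suc n)) X) = power_int 2 (- exp_sum w)"
  proof -
    have "specialise (comb_sum (framed (Suc n)) X) = comb_real_sum (\<lambda>w. specialise (framed (Suc n) w)) X"
      by (rule specialise_comb_sum)
    also have "\<dots> = comb_weight X"
      using terms unfolding comb_real_sum_def comb_weight_def
      by (intro arg_cong[where f=sum_list] map_cong) auto
    also have "\<dots> = comb_weight [(1, 0, w)]"
      using X(2) by (simp add: skein_equiv_def)
    finally show ?thesis
      by (simp add: comb_weight_def)
  qed
  ultimately show ?thesis
    using framed_w by simp
qed

lemma framed_mfw_specialise:
  "braid_word (Suc m) w \<Longrightarrow>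
     mfw_range (Suc m) (framed (Suc m) w) \<and> specialise (framed (Suc m) w) = power_int 2 (- exp_sum w)"
proof (induction m arbitrary: w)
  case 0
  then have "w = []"
    by (cases w) auto
  then show ?case
    using framed_unknot by (simp add: mfw_range_def vcoeff_one specialise_one)
next
  case (Suc m)
  show ?case
    by (rule mfw_step[OF _ Suc.IH Suc.prems]) simp
qed

lemma framed_mfw: "n \<ge> 1 \<Longrightarrow> braid_word n w \<Longrightarrow> mfw_range n (framed n w)"
  using framed_mfw_specialise[of "n - 1" w] by simp

lemma framed_nonzero: "n \<ge> 1 \<Longrightarrow> braid_word n w \<Longrightarrow> framed n w \<noteq> 0"
  using framed_mfw_specialise[of "n - 1" w] specialise_zero by auto

end

section \<open>Twists and the Jucys--Murphy word\<close>

definition sigma_up :: "nat \<Rightarrow> int list" where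
  "sigma_up m = map int [1..<m]"

text \<open>The word \<open>\<sigma>\<^sub>m\<^sub>-\<^sub>1\<cdots>\<sigma>\<^sub>1\<sigma>\<^sub>1\<cdots>\<sigma>\<^sub>m\<^sub>-\<^sub>1\<close>, equal to \<open>\<Delta>\<^sub>m\<^sub>-\<^sub>1\<^sup>-\<^sup>1 \<Delta>\<^sub>m\<^sup>2 \<Delta>\<^sub>m\<^sub>-\<^sub>1\<^sup>-\<^sup>1\<close>.\<close>
definition jucys_murphy :: "nat \<Rightarrow> int list" where
  "jucys_murphy m = rev (sigma_up m) @ sigma_up m"

lemma sigma_up_Suc: "m \<ge> 1 \<Longrightarrow> sigma_up (Suc m) = sigma_up m @ [int m]"
  by (simp add: sigma_up_def)

lemma sigma_up_range: "l \<in> set (sigma_up m) \<Longrightarrow> 1 \<le> l \<and> l < int m"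
  by (auto simp: sigma_up_def)

lemma braid_word_sigma_up: "braid_word m (sigma_up m)"
  using sigma_up_range unfolding braid_word_def by fastforce

lemma braid_word_rev [simp]: "braid_word m (rev w) \<longleftrightarrow> braid_word m w"
  by (simp add: braid_word_def)

lemma braid_word_jucys_murphy: "braid_word m (jucys_murphy m)"
  using braid_word_sigma_up by (simp add: jucys_murphy_def)

lemma jucys_murphy_Suc: "m \<ge> 1 \<Longrightarrow> jucys_murphy (Suc m) = [int m] @ jucys_murphy m @ [int m]"
  by (simp add: jucys_murphy_def sigma_up_Suc)

lemma half_twist_Suc: "half_twist (Suc m) = sigma_up (Suc m) @ half_twist m"
proof -
  have "[0..<Suc m] = 0 # map Suc [0..<m]"
    by (simp add: map_Suc_upt upt_conv_Cons)
  then show ?thesis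
    by (simp add: half_twist_def sigma_up_def comp_def)
qed

lemma half_twist_range: "l \<in> set (half_twist m) \<Longrightarrow> 1 \<le> l \<and> l < int m"
  by (induction m) (auto simp: half_twist_Suc half_twist_def dest: sigma_up_range)

lemma braid_word_half_twist: "braid_word m (half_twist m)"
  using half_twist_range unfolding braid_word_def by force

lemma braid_word_full_twist: "braid_word n (full_twist n)"
  by (simp add: full_twist_def braid_word_half_twist)

lemma exp_sum_sigma_up: "exp_sum (sigma_up (Suc m)) = int m"
  by (induction m) (simp_all add: sigma_up_def)

lemma exp_sum_full_twist: "exp_sum (full_twist n) = int n * (int n - 1)"
proof -
  have "2 * exp_sum (half_twist m) = int m * (int m - 1)" for m
    by (induction m) (simp_all add: half_twist_def[of 0] half_twist_Suc exp_sum_sigma_up algebra_simps)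
  then show ?thesis
    by (simp add: full_twist_def)
qed

lemma sigma_up_split:
  assumes "1 \<le> k" "k + 1 \<le> n"
  shows "sigma_up (Suc n) = map int [1..<k] @ [int k, int k + 1] @ map int [k + 2..<Suc n]"
proof -
  have "[1..<Suc n] = [1..<k] @ [k..<Suc n]"
    using assms upt_add_eq_append[of 1 k "Suc n - k"] by simp
  moreover have "[k..<Suc n] = k # Suc k # [k + 2..<Suc n]"
    using assms by (simp add: upt_conv_Cons)
  ultimately show ?thesis
    by (simp add: sigma_up_def)
qed

context homfly
begin

lemma sigma_up_conj:
  assumes k: "1 \<le> k" "k + 1 \<le> n"
  shows "skein_equiv (Suc n) [(1, 0, sigma_up (Suc n) @ [int k])] [(1, 0, [int k + 1] @ sigma_up (Suc n))]"
proof -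
  define A where "A = map int [1..<k]"
  define B where "B = map int [k + 2..<Suc n]"
  have S: "sigma_up (Suc n) = A @ [int k, int k + 1] @ B"
    unfolding A_def B_def by (rule sigma_up_split[OF k])
  have bA: "braid_word (Suc n) A" and bB: "braid_word (Suc n) B"
    using k by (auto simp: A_def B_def braid_word_def)
  have lA: "\<forall>l\<in>set A. 2 \<le> \<bar>\<bar>int k + 1\<bar> - \<bar>l\<bar>\<bar>" and lB: "\<forall>l\<in>set B. 2 \<le> \<bar>\<bar>int k\<bar> - \<bar>l\<bar>\<bar>"
    using k by (auto simp: A_def B_def)
  have "skein_equiv (Suc n) [(1, 0, A @ [int k, int k + 1] @ B @ [int k])]
          [(1, 0, (A @ [int k, int k + 1]) @ (int k # B) @ [])]"
    using skein_equiv_subst_word[OF skein_equiv_sym[OF skein_equiv_commute_word[OF _ _ bB lB]],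
        of "A @ [int k, int k + 1]" "[]"] k bA bB
    by simp
  also have "skein_equiv (Suc n) \<dots> [(1, 0, A @ [int k + 1, int k, int k + 1] @ B)]"
    using skein_equiv_subst_word[OF skein_equiv_braid_rel[of "int k" "Suc n"], of A B] k bA bB
    by simp
  also have "skein_equiv (Suc n) \<dots> [(1, 0, [] @ ((int k + 1) # A) @ ([int k, int k + 1] @ B))]"
    using skein_equiv_subst_word[OF skein_equiv_sym[OF skein_equiv_commute_word[OF _ _ bA lA]],
        of "[]" "[int k, int k + 1] @ B"] k bA bB
    by simp
  finally show ?thesis
    unfolding S by simp
qed

lemma sigma_down_conj:
  assumes k: "1 \<le> k" "k + 1 \<le> n"
  shows "skein_equiv (Suc n) [(1, 0, rev (sigma_up (Suc n)) @ [int k + 1])]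
           [(1, 0, [int k] @ rev (sigma_up (Suc n)))]"
proof -
  define A where "A = rev (map int [1..<k])"
  define B where "B = rev (map int [k + 2..<Suc n])"
  have S: "rev (sigma_up (Suc n)) = B @ [int k + 1, int k] @ A"
    unfolding A_def B_def sigma_up_split[OF k] by simp
  have bA: "braid_word (Suc n) A" and bB: "braid_word (Suc n) B"
    using k by (auto simp: A_def B_def braid_word_def)
  have lA: "\<forall>l\<in>set A. 2 \<le> \<bar>\<bar>int k + 1\<bar> - \<bar>l\<bar>\<bar>" and lB: "\<forall>l\<in>set B. 2 \<le> \<bar>\<bar>int k\<bar> - \<bar>l\<bar>\<bar>"
    using k by (auto simp: A_def B_def)
  have "skein_equiv (Suc n) [(1, 0, B @ [int k + 1, int k] @ A @ [int k + 1])]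
          [(1, 0, (B @ [int k + 1, int k]) @ ((int k + 1) # A) @ [])]"
    using skein_equiv_subst_word[OF skein_equiv_sym[OF skein_equiv_commute_word[OF _ _ bA lA]],
        of "B @ [int k + 1, int k]" "[]"] k bA bB
    by simp
  also have "skein_equiv (Suc n) \<dots> [(1, 0, B @ [int k, int k + 1, int k] @ A)]"
    using skein_equiv_subst_word[OF skein_equiv_sym[OF skein_equiv_braid_rel[of "int k" "Suc n"]],
        of B A] k bA bB
    by simp
  also have "skein_equiv (Suc n) \<dots> [(1, 0, [] @ (int k # B) @ ([int k + 1, int k] @ A))]"
    using skein_equiv_subst_word[OF skein_equiv_sym[OF skein_equiv_commute_word[OF _ _ bB lB]],
        of "[]" "[int k + 1, int k] @ A"] k bA bB
    by simp
  finally show ?thesis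
    unfolding S by simp
qed

lemma jucys_murphy_commute_pos:
  assumes k: "1 \<le> k" "k + 1 \<le> n"
  shows "skein_equiv (Suc n) [(1, 0, int k # jucys_murphy (Suc n))] [(1, 0, jucys_murphy (Suc n) @ [int k])]"
proof -
  have b: "braid_word (Suc n) (sigma_up (Suc n))"
    by (rule braid_word_sigma_up)
  have "skein_equiv (Suc n) [(1, 0, [] @ ([int k] @ rev (sigma_up (Suc n))) @ sigma_up (Suc n))]
          [(1, 0, [] @ (rev (sigma_up (Suc n)) @ [int k + 1]) @ sigma_up (Suc n))]"
    by (rule skein_equiv_subst_word[OF skein_equiv_sym[OF sigma_down_conj[OF k]]]) (use b in auto)
  also have "\<dots> = [(1, 0, rev (sigma_up (Suc n)) @ ([int k + 1] @ sigma_up (Suc n)) @ [])]"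
    by simp
  also have "skein_equiv (Suc n) \<dots> [(1, 0, rev (sigma_up (Suc n)) @ (sigma_up (Suc n) @ [int k]) @ [])]"
    by (rule skein_equiv_subst_word[OF skein_equiv_sym[OF sigma_up_conj[OF k]]]) (use b in auto)
  finally show ?thesis
    by (simp add: jucys_murphy_def)
qed

lemma jucys_murphy_commute_letter:
  assumes g: "g \<noteq> 0" "\<bar>g\<bar> < int n"
  shows "skein_equiv (Suc n) [(1, 0, g # jucys_murphy (Suc n))] [(1, 0, jucys_murphy (Suc n) @ [g])]"
proof (cases "g > 0")
  case True
  then show ?thesis
    using jucys_murphy_commute_pos[of "nat g" n] g by simp
next
  case False
  define k where "k = nat (- g)"
  have k: "1 \<le> k" "k + 1 \<le> n" "g = - int k"
    using g False by (auto simp: k_def)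
  have J: "braid_word (Suc n) (jucys_murphy (Suc n))"
    by (rule braid_word_jucys_murphy)
  have "skein_equiv (Suc n) [(1, 0, ([g] @ jucys_murphy (Suc n)) @ [] @ [])]
          [(1, 0, ([g] @ jucys_murphy (Suc n)) @ [int k, - int k] @ [])]"
    by (rule skein_equiv_subst_word[OF skein_equiv_sym[OF skein_equiv_cancel[of "int k" "Suc n"]]])
      (use k J in auto)
  also have "skein_equiv (Suc n) \<dots> [(1, 0, [g] @ (int k # jucys_murphy (Suc n)) @ [g])]"
    using skein_equiv_subst_word[OF skein_equiv_sym[OF jucys_murphy_commute_pos[OF k(1,2)]], of "[g]" "[g]"] k J
    by simp
  also have "\<dots> = [(1, 0, [] @ [g, int k] @ (jucys_murphy (Suc n) @ [g]))]"
    by simp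
  also have "skein_equiv (Suc n) \<dots> [(1, 0, [] @ [] @ (jucys_murphy (Suc n) @ [g]))]"
    by (rule skein_equiv_subst_word) (use skein_equiv_cancel[of g "Suc n"] k J in auto)
  finally show ?thesis
    by simp
qed

lemma jucys_murphy_commute:
  assumes "braid_word n b"
  shows "skein_equiv (Suc n) [(1, 0, b @ jucys_murphy (Suc n))] [(1, 0, jucys_murphy (Suc n) @ b)]"
  using assms
proof (induction b)
  case Nil
  then show ?case
    using braid_word_jucys_murphy by (simp add: skein_equiv_refl)
next
  case (Cons g b)
  have b: "braid_word (Suc n) b" "g \<noteq> 0" "\<bar>g\<bar> < int n"
    using Cons.prems braid_word_Suc by auto
  have "skein_equiv (Suc n) [(1, 0, [g] @ (b @ jucys_murphy (Suc n)) @ [])]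
          [(1, 0, [g] @ (jucys_murphy (Suc n) @ b) @ [])]"
    by (rule skein_equiv_subst_word[OF Cons.IH]) (use Cons.prems b in auto)
  also have "skein_equiv (Suc n) \<dots> [(1, 0, [] @ (jucys_murphy (Suc n) @ [g]) @ b)]"
    using skein_equiv_subst_word[OF jucys_murphy_commute_letter[OF b(2,3)], of "[]" b] b by simp
  finally show ?case
    by simp
qed

lemma half_twist_Suc_equiv:
  "skein_equiv (Suc m) [(1, 0, half_twist (Suc m))] [(1, 0, half_twist m @ rev (sigma_up (Suc m)))]"
proof (induction m)
  case 0
  then show ?case
    by (simp add: half_twist_Suc half_twist_def sigma_up_def skein_equiv_refl)
next
  case (Suc m)
  let ?N = "Suc (Suc m)"
  have bs: "braid_word ?N (sigma_up (Suc m))" "braid_word ?N (sigma_up ?N)"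
    using braid_word_sigma_up[of "Suc m"] braid_word_sigma_up[of ?N] braid_word_Suc by auto
  have bh: "braid_word ?N (half_twist m)"
    using braid_word_half_twist[of m] braid_word_mono by auto
  have "skein_equiv ?N [(1, 0, sigma_up ?N @ half_twist (Suc m) @ [])]
          [(1, 0, sigma_up ?N @ (half_twist m @ rev (sigma_up (Suc m))) @ [])]"
    by (rule skein_equiv_subst_word[OF skein_equiv_mono[OF Suc.IH]]) (use bs in auto)
  also have "\<dots> = [(1, 0, sigma_up (Suc m) @ (int (Suc m) # half_twist m) @ rev (sigma_up (Suc m)))]"
    by (simp add: sigma_up_Suc[of "Suc m"])
  also have "skein_equiv ?N \<dots> [(1, 0, sigma_up (Suc m) @ (half_twist m @ [int (Suc m)]) @ rev (sigma_up (Suc m)))]"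
  proof (rule skein_equiv_subst_word[OF skein_equiv_commute_word])
    show "\<forall>l\<in>set (half_twist m). 2 \<le> \<bar>\<bar>int (Suc m)\<bar> - \<bar>l\<bar>\<bar>"
      using half_twist_range[of _ m] by fastforce
  qed (use bs bh in auto)
  finally show ?case
    by (simp add: half_twist_Suc sigma_up_Suc[of "Suc m"])
qed

lemma jucys_murphy_expansion:
  "\<exists>Y. comb_all (top_once m) Y \<and> skein_equiv (Suc m) [(1, 0, jucys_murphy (Suc m))] ((1, 0, []) # Y)"
proof (induction m)
  case 0
  then show ?case
    by (intro exI[of _ "[]"]) (simp add: jucys_murphy_def sigma_up_def skein_equiv_refl)
next
  case (Suc m)
  obtain Y where Y: "comb_all (top_once m) Y"
      "skein_equiv (Suc m) [(1, 0, jucys_murphy (Suc m))] ((1, 0, []) # Y)"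
    using Suc.IH by blast
  let ?N = "Suc (Suc m)" and ?g = "int (Suc m)"
  have e1: "skein_equiv ?N [(1, 0, [?g] @ jucys_murphy (Suc m) @ [?g])] (comb_ctx [?g] ((1, 0, []) # Y) [?g])"
    by (rule skein_equiv_subst[OF skein_equiv_mono[OF Y(2)]]) auto
  have "\<exists>Z. comb_all (top_once (Suc m)) Z \<and> skein_equiv ?N (comb_ctx [?g] Y [?g]) Z"
  proof (rule reduce_in_ctx)
    fix k j f assume kf: "(k, j, f) \<in> set Y"
    have "braid_word (Suc m) f"
      using skein_equiv_braid_wordD[OF Y(2)] kf by auto
    then have "m \<ge> 1"
      using top_once_pos comb_allD[OF Y(1) kf] by blast
    then obtain w where "top_once (Suc m) w" "skein_equiv ?N [(1, 0, [] @ [?g] @ f @ [?g])] [(1, 0, w)]"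
      using slide_top_crossing[of "Suc m" "[]" f] comb_allD[OF Y(1) kf] by auto
    then show "\<exists>Y. comb_all (top_once (Suc m)) Y \<and> skein_equiv ?N [(1, 0, [?g] @ f @ [?g])] Y"
      by (intro exI[of _ "[(1, 0, w)]"]) simp
  qed
  then obtain Z where Z: "comb_all (top_once (Suc m)) Z" "skein_equiv ?N (comb_ctx [?g] Y [?g]) Z"
    by blast
  have "skein_equiv ?N (comb_ctx [?g] ((1, 0, []) # Y) [?g]) ([(1, 0, []), (1, 1, [?g])] @ Z)"
    using skein_equiv_append[OF skein_equiv_square[of ?g ?N] Z(2)] by simp
  with e1 have "skein_equiv ?N [(1, 0, jucys_murphy ?N)] ((1, 0, []) # (1, 1, [?g]) # Z)"
    using skein_equiv_trans by (simp add: jucys_murphy_Suc)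
  moreover have "top_once (Suc m) [?g]"
    using top_onceI[of "Suc m" "[]" "[]"] by simp
  ultimately show ?case
    using Z(1) by (intro exI[of _ "(1, 1, [?g]) # Z"]) simp
qed

end

section \<open>The extreme columns\<close>

context homfly
begin

lemma right_column_top_once:
  assumes n1: "n \<ge> 1" and ab: "braid_word n a" "braid_word n b"
  shows "vcoeff (framed (Suc n) (a @ [int n] @ b)) (int n) \<beta> = 0"
  using framed_mfw[OF n1, of "a @ b"] ab
  unfolding framed_stab_pos[OF n1 ab] vcoeff_vz_mult mfw_range_def by auto

lemma left_column_top_once:
  assumes n1: "n \<ge> 1" and ab: "braid_word n a" "braid_word n b"
  shows "vcoeff (framed (Suc n) (a @ [int n] @ b)) (- int n) \<beta> = vcoeff (framed n (a @ b)) (1 - int n) \<beta>"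
  unfolding framed_stab_pos[OF n1 ab] vcoeff_vz_mult by simp

lemma right_column_split_strand:
  assumes n1: "n \<ge> 1" and x: "braid_word n x"
  shows "vcoeff (framed (Suc n) x) (int n) \<beta> = - vcoeff (framed n x) (int n - 1) (\<beta> + 1)"
  using framed_mfw[OF n1 x]
  unfolding framed_split_strand[OF n1 x] vcoeff_unlink_factor_mult mfw_range_def by auto

lemma left_column_split_strand:
  assumes n1: "n \<ge> 1" and x: "braid_word n x"
  shows "vcoeff (framed (Suc n) x) (- int n) \<beta> = vcoeff (framed n x) (1 - int n) (\<beta> + 1)"
  using framed_mfw[OF n1 x]
  unfolding framed_split_strand[OF n1 x] vcoeff_unlink_factor_mult mfw_range_def by auto

lemma right_column_jucys_murphy:
  assumes n1: "n \<ge> 1" and x: "braid_word n x"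
  shows "vcoeff (framed (Suc n) (x @ jucys_murphy (Suc n))) (int n) \<beta> = vcoeff (framed (Suc n) x) (int n) \<beta>"
proof -
  obtain m where nm: "n = Suc m"
    using n1 by (cases n) auto
  obtain Y where Y: "comb_all (top_once m) Y" "skein_equiv n [(1, 0, jucys_murphy n)] ((1, 0, []) # Y)"
    using jucys_murphy_expansion[of m] nm by blast
  have xS: "braid_word (Suc n) x"
    using x braid_word_Suc by auto
  have expand: "skein_equiv (Suc n) [(1, 0, (x @ [int n]) @ jucys_murphy n @ [int n])]
          (comb_ctx (x @ [int n]) ((1, 0, []) # Y) [int n])"
    by (rule skein_equiv_subst[OF skein_equiv_mono[OF Y(2)]]) (use xS n1 in auto)
  have J: "framed (Suc n) (x @ jucys_murphy (Suc n))
      = framed (Suc n) (x @ [int n] @ [int n]) + comb_sum (framed (Suc n)) (comb_ctx (x @ [int n]) Y [int n])"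
    using comb_sum_framed_eq[OF expand order_refl] n1 by (simp add: jucys_murphy_Suc vz_0_0)
  have sq: "skein_equiv (Suc n) [(1, 0, x @ [int n, int n] @ [])] (comb_ctx x [(1, 0, []), (1, 1, [int n])] [])"
    by (rule skein_equiv_subst[OF skein_equiv_square]) (use xS n1 in auto)
  have "framed (Suc n) (x @ [int n] @ [int n]) = framed (Suc n) x + vz 0 1 * framed (Suc n) (x @ [int n] @ [])"
    using comb_sum_framed_eq[OF sq order_refl] by (simp add: vz_0_0)
  then have square: "vcoeff (framed (Suc n) (x @ [int n] @ [int n])) (int n) \<beta> = vcoeff (framed (Suc n) x) (int n) \<beta>"
    using right_column_top_once[OF n1 x braid_word_Nil, of "\<beta> - 1"] by (simp add: vcoeff_add vcoeff_vz_mult)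
  have top_once_terms: "vcoeff (framed (Suc n) ((x @ [int n]) @ w @ [int n])) (int n) b = 0"
    if kjw: "(k, j, w) \<in> set Y" for k j w b
  proof -
    have "top_once (n - 1) w" "braid_word n w"
      using comb_allD[OF Y(1) kjw] skein_equiv_braid_wordD[OF Y(2)] kjw nm by auto
    moreover from this have "n \<ge> 2"
      using top_once_pos by fastforce
    ultimately obtain w' where "top_once n w'"
        "skein_equiv (Suc n) [(1, 0, x @ [int n] @ w @ [int n])] [(1, 0, w')]"
      using slide_top_crossing[OF _ x] by blast
    then show ?thesis
      using framed_eq_if_skein_equiv right_column_top_once[OF n1] unfolding top_once_def by fastforce
  qed
  have "vcoeff (comb_sum (framed (Suc n)) (comb_ctx (x @ [int n]) Y [int n])) (int n) \<beta> = (\<Sum>t\<leftarrow>Y. 0)"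
    unfolding comb_sum_ctx vcoeff_comb_sum
    by (intro arg_cong[where f = sum_list] map_cong) (auto simp: top_once_terms[simplified])
  then show ?thesis
    unfolding J vcoeff_add square by simp
qed

lemma right_column_top_jucys_murphy:
  assumes n1: "n \<ge> 1" and x: "braid_word n x"
  shows "vcoeff (framed (Suc n) (x @ [int n] @ jucys_murphy (Suc n))) (int n) \<beta>
       = vcoeff (framed (Suc n) x) (int n) (\<beta> - 1)"
proof -
  have xS: "braid_word (Suc n) x"
    using x braid_word_Suc by auto
  have J: "braid_word n (jucys_murphy n)" "braid_word (Suc n) (jucys_murphy n @ [int n])"
    using braid_word_jucys_murphy[of n] braid_word_Suc[of n "jucys_murphy n"] n1 by auto
  have sq: "skein_equiv (Suc n) [(1, 0, x @ [int n, int n] @ (jucys_murphy n @ [int n]))]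
          (comb_ctx x [(1, 0, []), (1, 1, [int n])] (jucys_murphy n @ [int n]))"
    by (rule skein_equiv_subst[OF skein_equiv_square]) (use xS n1 J in auto)
  have "framed (Suc n) (x @ [int n] @ jucys_murphy (Suc n))
      = framed (Suc n) ((x @ jucys_murphy n) @ [int n] @ []) + vz 0 1 * framed (Suc n) (x @ jucys_murphy (Suc n))"
    using comb_sum_framed_eq[OF sq order_refl] n1 by (simp add: vz_0_0 jucys_murphy_Suc)
  moreover have "vcoeff (framed (Suc n) ((x @ jucys_murphy n) @ [int n] @ [])) (int n) \<beta> = 0"
    by (rule right_column_top_once[OF n1]) (use x J in auto)
  ultimately show ?thesis
    using right_column_jucys_murphy[OF n1 x, of "\<beta> - 1"] by (simp add: vcoeff_add vcoeff_vz_mult)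
qed

definition columns_match :: "nat \<Rightarrow> int list \<Rightarrow> bool" where
  "columns_match n y \<longleftrightarrow>
     (\<forall>\<beta>. vcoeff (framed n y) (1 - int n) \<beta> = (-1) ^ (n - 1) * vcoeff (framed n (y @ full_twist n)) (int n - 1) \<beta>)"

lemma framed_full_twist_Suc:
  assumes "braid_word (Suc n) a"
  shows "framed (Suc n) (a @ full_twist (Suc n))
       = framed (Suc n) (a @ half_twist n @ jucys_murphy (Suc n) @ half_twist n)"
proof -
  have "full_twist (Suc n) = half_twist (Suc n) @ sigma_up (Suc n) @ half_twist n"
    by (simp add: full_twist_def half_twist_Suc[of n])
  moreover have "framed (Suc n) (a @ half_twist (Suc n) @ sigma_up (Suc n) @ half_twist n)
      = framed (Suc n) (a @ (half_twist n @ rev (sigma_up (Suc n))) @ sigma_up (Suc n) @ half_twist n)"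
    by (rule framed_eq_if_skein_equiv[OF skein_equiv_subst_word[OF half_twist_Suc_equiv] order_refl])
      (use assms braid_word_sigma_up braid_word_half_twist[of n] braid_word_Suc in auto)
  ultimately show ?thesis
    by (simp add: jucys_murphy_def)
qed

lemma columns_match_Suc_lower:
  assumes n1: "n \<ge> 1" and IH: "\<And>y. braid_word n y \<Longrightarrow> columns_match n y" and a: "braid_word n a"
  shows "columns_match (Suc n) a"
proof -
  let ?h = "half_twist n"
  have h: "braid_word n ?h" "braid_word (Suc n) ?h"
    using braid_word_half_twist[of n] braid_word_Suc by auto
  have "framed (Suc n) (a @ full_twist (Suc n)) = framed (Suc n) (?h @ a @ ?h @ jucys_murphy (Suc n))"
    unfolding framed_full_twist_Suc[OF braid_word_Suc[OF a]]
    using framed_rotate[of "Suc n" "a @ ?h @ jucys_murphy (Suc n)" ?h] a h braid_word_jucys_murphy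
      braid_word_Suc[of n a]
    by simp
  moreover have "framed n (?h @ a @ ?h) = framed n (a @ full_twist n)"
    using framed_rotate[of n ?h "a @ ?h"] a h by (simp add: full_twist_def)
  ultimately have right: "vcoeff (framed (Suc n) (a @ full_twist (Suc n))) (int n) \<beta>
      = - vcoeff (framed n (a @ full_twist n)) (int n - 1) (\<beta> + 1)" for \<beta>
    using right_column_jucys_murphy[OF n1, of "?h @ a @ ?h"] right_column_split_strand[OF n1, of "?h @ a @ ?h"]
      a h by simp
  have "(-1::int) ^ n = - ((-1) ^ (n - 1))"
    using n1 by (cases n) auto
  then show ?thesis
    using IH[OF a] left_column_split_strand[OF n1 a] right by (simp add: columns_match_def)
qed

lemma columns_match_Suc_top_once:
  assumes n1: "n \<ge> 1" and IH: "\<And>y. braid_word n y \<Longrightarrow> columns_match n y"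
    and ab: "braid_word n a" "braid_word n b"
  shows "columns_match (Suc n) (a @ [int n] @ b)"
proof -
  let ?h = "half_twist n" and ?J = "jucys_murphy (Suc n)"
  have h: "braid_word n ?h" "braid_word (Suc n) ?h"
    using braid_word_half_twist[of n] braid_word_Suc by auto
  have abS: "braid_word (Suc n) a" "braid_word (Suc n) b"
    using ab braid_word_Suc by auto
  have J: "braid_word (Suc n) ?J"
    by (rule braid_word_jucys_murphy)
  have "framed (Suc n) ((a @ [int n] @ b) @ full_twist (Suc n))
      = framed (Suc n) ((a @ [int n]) @ ((b @ ?h) @ ?J) @ ?h)"
    using framed_full_twist_Suc[of n "a @ [int n] @ b"] abS n1 by simp
  also have "\<dots> = framed (Suc n) ((a @ [int n]) @ (?J @ (b @ ?h)) @ ?h)"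
    by (rule framed_eq_if_skein_equiv[OF skein_equiv_subst_word[OF jucys_murphy_commute] order_refl])
      (use ab h abS n1 in auto)
  also have "\<dots> = framed (Suc n) ((b @ ?h @ ?h @ a) @ [int n] @ ?J)"
    using framed_rotate[of "Suc n" "a @ [int n] @ ?J" "b @ ?h @ ?h"] abS h J n1 by simp
  finally have "framed (Suc n) ((a @ [int n] @ b) @ full_twist (Suc n))
      = framed (Suc n) ((b @ ?h @ ?h @ a) @ [int n] @ ?J)" .
  moreover have "framed n (b @ ?h @ ?h @ a) = framed n ((a @ b) @ full_twist n)"
    using framed_rotate[of n "b @ ?h @ ?h" a] ab h by (simp add: full_twist_def)
  ultimately have right: "vcoeff (framed (Suc n) ((a @ [int n] @ b) @ full_twist (Suc n))) (int n) \<beta>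
      = - vcoeff (framed n ((a @ b) @ full_twist n)) (int n - 1) \<beta>" for \<beta>
    using right_column_top_jucys_murphy[OF n1, of "b @ ?h @ ?h @ a"]
      right_column_split_strand[OF n1, of "b @ ?h @ ?h @ a"] ab h by simp
  have "(-1::int) ^ n = - ((-1) ^ (n - 1))"
    using n1 by (cases n) auto
  then show ?thesis
    using IH[of "a @ b"] left_column_top_once[OF n1 ab] right ab by (simp add: columns_match_def)
qed

lemma columns_match_Suc:
  assumes n1: "n \<ge> 1" and IH: "\<And>y. braid_word n y \<Longrightarrow> columns_match n y" and y: "braid_word (Suc n) y"
  shows "columns_match (Suc n) y"
proof -
  obtain X where X: "comb_all (top_reduced n) X" "skein_equiv (Suc n) [(1, 0, y)] X"
    using top_reduction[OF y] by blast
  have Xt: "skein_equiv (Suc n) [(1, 0, [] @ y @ full_twist (Suc n))] (comb_ctx [] X (full_twist (Suc n)))"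
    by (rule skein_equiv_subst[OF X(2)]) (use braid_word_full_twist in auto)
  have twisted: "framed (Suc n) (y @ full_twist (Suc n)) = comb_sum (\<lambda>w. framed (Suc n) (w @ full_twist (Suc n))) X"
    using comb_sum_framed_eq[OF Xt order_refl] by (simp add: vz_0_0 comb_sum_ctx)
  have plain: "framed (Suc n) y = comb_sum (framed (Suc n)) X"
    using comb_sum_framed_eq[OF X(2) order_refl] by (simp add: vz_0_0)
  have terms: "columns_match (Suc n) w" if "(k, j, w) \<in> set X" for k j w
    using comb_allD[OF X(1) that] columns_match_Suc_lower[OF n1 IH] columns_match_Suc_top_once[OF n1 IH]
    unfolding top_reduced_def top_once_def by auto
  have "vcoeff (framed (Suc n) y) (- int n) \<beta>
      = (-1) ^ n * vcoeff (framed (Suc n) (y @ full_twist (Suc n))) (int n) \<beta>" for \<beta>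
    unfolding plain twisted vcoeff_comb_sum sum_list_const_mult[symmetric]
    by (intro arg_cong[where f = sum_list] map_cong) (auto dest!: terms simp: columns_match_def)
  then show ?thesis
    by (simp add: columns_match_def)
qed

lemma columns_match_all: "n \<ge> 1 \<Longrightarrow> braid_word n y \<Longrightarrow> columns_match n y"
proof (induction n arbitrary: y rule: nat_induct_at_least)
  case base
  then have "y = []"
    by (cases y) auto
  then show ?case
    by (simp add: columns_match_def full_twist_def half_twist_def)
next
  case (Suc n)
  then show ?case
    using columns_match_Suc by blast
qed

end

lemma vdeg_min_eq_iff:
  assumes "p \<noteq> 0" "\<And>a b. vcoeff p a b \<noteq> 0 \<Longrightarrow> L \<le> a"
  shows "vdeg_min p = L \<longleftrightarrow> (\<exists>b. vcoeff p L b \<noteq> 0)"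
proof
  assume min: "vdeg_min p = L"
  have "Min (fst ` Poly_Mapping.keys p) \<in> fst ` Poly_Mapping.keys p"
    using assms(1) by (intro Min_in) auto
  then show "\<exists>b. vcoeff p L b \<noteq> 0"
    using min by (force simp: vdeg_min_def vcoeff_def in_keys_iff)
next
  assume "\<exists>b. vcoeff p L b \<noteq> 0"
  then have "L \<in> fst ` Poly_Mapping.keys p"
    by (force simp: vcoeff_def in_keys_iff)
  then show "vdeg_min p = L"
    unfolding vdeg_min_def using assms(2) by (intro Min_eqI) (auto simp: vcoeff_def in_keys_iff)
qed

lemma vdeg_max_eq_iff:
  assumes "p \<noteq> 0" "\<And>a b. vcoeff p a b \<noteq> 0 \<Longrightarrow> a \<le> U"
  shows "vdeg_max p = U \<longleftrightarrow> (\<exists>b. vcoeff p U b \<noteq> 0)"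
proof
  assume max: "vdeg_max p = U"
  have "Max (fst ` Poly_Mapping.keys p) \<in> fst ` Poly_Mapping.keys p"
    using assms(1) by (intro Max_in) auto
  then show "\<exists>b. vcoeff p U b \<noteq> 0"
    using max by (force simp: vdeg_max_def vcoeff_def in_keys_iff)
next
  assume "\<exists>b. vcoeff p U b \<noteq> 0"
  then have "U \<in> fst ` Poly_Mapping.keys p"
    by (force simp: vcoeff_def in_keys_iff)
  then show "vdeg_max p = U"
    unfolding vdeg_max_def using assms(2) by (intro Max_eqI) (auto simp: vcoeff_def in_keys_iff)
qed

context homfly
begin

lemma vcoeff_P: "vcoeff (P m w) d b = vcoeff (framed m w) (d - exp_sum w) b"
  by (simp add: P_eq_framed vcoeff_vz_mult)

lemma P_nonzero: "n \<ge> 1 \<Longrightarrow> braid_word n w \<Longrightarrow> P n w \<noteq> 0"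
  using framed_nonzero[of n w] by (auto simp: framed_def)

lemma mfw_inequality:
  assumes "n \<ge> 1" "braid_word n w" "vcoeff (P n w) d b \<noteq> 0"
  shows "exp_sum w - int n + 1 \<le> d \<and> d \<le> exp_sum w + int n - 1"
  using framed_mfw[OF assms(1,2)] assms(3) by (force simp: mfw_range_def vcoeff_P)

lemma lower_mfw_sharp_iff:
  assumes "n \<ge> 1" "braid_word n w"
  shows "vdeg_min (P n w) = exp_sum w - int n + 1 \<longleftrightarrow> (\<exists>b. vcoeff (P n w) (exp_sum w - int n + 1) b \<noteq> 0)"
  by (rule vdeg_min_eq_iff) (use P_nonzero mfw_inequality assms in auto)

lemma upper_mfw_sharp_iff:
  assumes "n \<ge> 1" "braid_word n w"
  shows "vdeg_max (P n w) = exp_sum w + int n - 1 \<longleftrightarrow> (\<exists>b. vcoeff (P n w) (exp_sum w + int n - 1) b \<noteq> 0)"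
  by (rule vdeg_max_eq_iff) (use P_nonzero mfw_inequality assms in auto)

lemma left_column_eq_right_column_twisted:
  assumes "n \<ge> 1" "braid_word n w"
  shows "vcoeff (P n w) (exp_sum w - int n + 1) b
       = (-1) ^ (n - 1) * vcoeff (P n (w @ full_twist n)) (exp_sum (w @ full_twist n) + int n - 1) b"
proof -
  have "vcoeff (P n w) (exp_sum w - int n + 1) b = vcoeff (framed n w) (1 - int n) b"
      "vcoeff (P n (w @ full_twist n)) (exp_sum (w @ full_twist n) + int n - 1) b
       = vcoeff (framed n (w @ full_twist n)) (int n - 1) b"
    by (simp_all add: vcoeff_P)
  then show ?thesis
    using columns_match_all[OF assms] by (simp add: columns_match_def)
qed

end

theorem theorem1p3:
  fixes P :: "nat \<Rightarrow> int list \<Rightarrow> lpoly" and n :: nat and \<beta> :: "int list"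
  assumes "homfly_braid P"
    and "n \<ge> 1"
    and "braid_word n \<beta>"
  shows "(vdeg_min (P n \<beta>) = exp_sum \<beta> - int n + 1 \<longleftrightarrow>
           vdeg_max (P n (\<beta> @ full_twist n)) = exp_sum \<beta> + int n ^ 2 - 1)
       \<and> (vdeg_min (P n \<beta>) = exp_sum \<beta> - int n + 1 \<longrightarrow>
           vcoeff (P n \<beta>) (exp_sum \<beta> - int n + 1)
             = (\<lambda>b. (-1) ^ (n - 1) * vcoeff (P n (\<beta> @ full_twist n)) (exp_sum \<beta> + int n ^ 2 - 1) b))"
proof -
  interpret homfly P
    by (rule homfly.intro) (fact assms(1))
  have twisted: "braid_word n (\<beta> @ full_twist n)"
    using assms(3) braid_word_full_twist by simp
  have top: "exp_sum (\<beta> @ full_twist n) + int n - 1 = exp_sum \<beta> + int n ^ 2 - 1"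
    by (simp add: exp_sum_full_twist power2_eq_square algebra_simps)
  show ?thesis
    using lower_mfw_sharp_iff[OF assms(2,3)] upper_mfw_sharp_iff[OF assms(2) twisted, unfolded top]
      left_column_eq_right_column_twisted[OF assms(2,3), unfolded top]
    by (auto simp: fun_eq_iff)
qed

end
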